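(* Let $\mathbb H(t)=4\arctan(e^t)$ and let $\lambda=q+ip$ with $q,p\in\mathbb{R}$, $q^2+p^2=1$, $p>0$, $\lambda\ne i$. Suppose $\Phi\in C^\infty(\mathbb{R}^2;\mathbb{C}^2)$ is parallel with respect to $(\mathbb H(x),\lambda)$ and $\sup_{(x,y)\in\ell}|\Phi(x,y)|<\infty$, where $\ell=\{(x,y)\in\mathbb{R}^2:-qx+py=0\}$. Then $\Phi\equiv0$.
   Context: Pauli matrices $\sigma_1=\begin{pmatrix}0&1\\1&0\end{pmatrix}$, $\sigma_2=\begin{pmatrix}0&-i\\ i&0\end{pmatrix}$, $\sigma_3=\begin{pmatrix}1&0\\0&-1\end{pmatrix}$. For $u\in C^\infty(\mathbb{R}^2)$, $\lambda\ne0$: $A=\frac i4\big((\lambda-\lambda^{-1}\cos u)\sigma_3-(\partial_xu-i\partial_yu)\sigma_2-\lambda^{-1}(\sin u)\sigma_1\big)$, $B=\frac14\big(-(\lambda+\lambda^{-1}\cos u)\sigma_3+(\partial_xu-i\partial_yu)\sigma_2-\lambda^{-1}(\sin u)\sigma_1\big)$; $\Phi$ is parallel with respect to $(u,\lambda)$ if $\partial_x\Phi=A\Phi$ and $\partial_y\Phi=B\Phi$ on $\mathbb{R}^2$. *)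

theory Defs
  imports "HOL-Analysis.Analysis"
begin

text \<open>Smoothness (C-infinity) of a function on the plane R^2 = real x real:
  f is differentiable everywhere, with partial derivatives fx, fy that are again smooth.
  (Coinductive, i.e. all iterated partial derivatives exist.)\<close>
coinductive smooth2 :: "(real \<times> real \<Rightarrow> 'b::real_normed_vector) \<Rightarrow> bool" where
  "(\<And>p. (f has_derivative (\<lambda>h. fst h *\<^sub>R fx p + snd h *\<^sub>R fy p)) (at p))
   \<Longrightarrow> smooth2 fx \<Longrightarrow> smooth2 fy \<Longrightarrow> smooth2 f"

definition sigma1 :: "complex^2^2" where
  "sigma1 = vector [vector [0, 1], vector [1, 0]]"
definition sigma2 :: "complex^2^2" where
  "sigma2 = vector [vector [0, -\<i>], vector [\<i>, 0]]"
definition sigma3 :: "complex^2^2" where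
  "sigma3 = vector [vector [1, 0], vector [0, -1]]"

definition cmat_scale :: "complex \<Rightarrow> complex^2^2 \<Rightarrow> complex^2^2" where
  "cmat_scale c M = (\<chi> i j. c * M $ i $ j)"

definition px :: "(real \<times> real \<Rightarrow> real) \<Rightarrow> real \<times> real \<Rightarrow> real" where
  "px u p = deriv (\<lambda>s. u (s, snd p)) (fst p)"
definition py :: "(real \<times> real \<Rightarrow> real) \<Rightarrow> real \<times> real \<Rightarrow> real" where
  "py u p = deriv (\<lambda>t. u (fst p, t)) (snd p)"

definition matA :: "(real \<times> real \<Rightarrow> real) \<Rightarrow> complex \<Rightarrow> real \<times> real \<Rightarrow> complex^2^2" where
  "matA u lam p = cmat_scale (\<i> / 4)
     (cmat_scale (lam - inverse lam * cos (u p)) sigma3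
      - cmat_scale (complex_of_real (px u p) - \<i> * complex_of_real (py u p)) sigma2
      - cmat_scale (inverse lam * sin (u p)) sigma1)"

definition matB :: "(real \<times> real \<Rightarrow> real) \<Rightarrow> complex \<Rightarrow> real \<times> real \<Rightarrow> complex^2^2" where
  "matB u lam p = cmat_scale (1 / 4)
     (- cmat_scale (lam + inverse lam * cos (u p)) sigma3
      + cmat_scale (complex_of_real (px u p) - \<i> * complex_of_real (py u p)) sigma2
      - cmat_scale (inverse lam * sin (u p)) sigma1)"

definition parallel :: "(real \<times> real \<Rightarrow> real) \<Rightarrow> complex \<Rightarrow> (real \<times> real \<Rightarrow> complex^2) \<Rightarrow> bool" where
  "parallel u lam \<Phi> \<longleftrightarrow>
     (\<forall>x y. ((\<lambda>s. \<Phi> (s, y)) has_vector_derivative (matA u lam (x, y) *v \<Phi> (x, y))) (at x)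
          \<and> ((\<lambda>t. \<Phi> (x, t)) has_vector_derivative (matB u lam (x, y) *v \<Phi> (x, y))) (at y))"

definition kink :: "real \<Rightarrow> real" where
  "kink t = 4 * arctan (exp t)"

end

theory Submission
  imports Defs
begin

(* Parametrise the line l by t |-> (p t, q t). Restricted to l, a parallel section solves the
   traceless linear system Phi' = (p A + q B) Phi, whose coefficients for the kink involve only
   sech (p t) and tanh (p t). This system has the explicit solutions
   e^(-t/2) (nu + tanh, - sech) and e^(t/2) (sech, tanh - nu), where nu = p - i q.
   Wronskians of solutions of a traceless system are constant, so the Wronskian of a bounded
   solution with the decaying (growing) one is O(e^(-t/2)) (resp. O(e^(t/2))) everywhere, hence
   zero. The explicit solutions are independent, their Wronskian being 1 - nu^2, which is nonzero
   because lambda <> i forces q <> 0; so Phi vanishes on l. As the kink does not depend on y,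
   B is constant along vertical lines, and uniqueness for d/dy Phi = B Phi spreads the zero from
   l to the whole plane. *)

section \<open>Linear ordinary differential equations\<close>

lemma has_real_derivative_inner_self:
  fixes f :: "real \<Rightarrow> 'a::real_inner"
  assumes "(f has_vector_derivative f') (at t)"
  shows "((\<lambda>t. f t \<bullet> f t) has_real_derivative 2 * (f t \<bullet> f')) (at t)"
proof -
  have "((\<lambda>t. f t \<bullet> f t) has_derivative (\<lambda>h. f t \<bullet> (h *\<^sub>R f') + (h *\<^sub>R f') \<bullet> f t)) (at t)"
    using assms unfolding has_vector_derivative_def by (intro has_derivative_inner)
  moreover have "(\<lambda>h. f t \<bullet> (h *\<^sub>R f') + (h *\<^sub>R f') \<bullet> f t) = (*) (2 * (f t \<bullet> f'))"
    by (auto simp: inner_commute)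
  ultimately show ?thesis
    by (simp add: has_field_derivative_def)
qed

lemma linear_growth_zero_forward:
  fixes f :: "real \<Rightarrow> 'a::real_inner"
  assumes f': "\<And>t. (f has_vector_derivative f' t) (at t)"
    and growth: "\<And>t. norm (f' t) \<le> K * norm (f t)"
    and "f t0 = 0" and "t0 \<le> t"
  shows "f t = 0"
proof -
  \<comment> \<open>the energy \<open>|f|\<^sup>2\<close> damped by \<open>exp (-2Ks)\<close> is nonincreasing and vanishes at \<open>t0\<close>\<close>
  let ?E = "\<lambda>s. exp (- 2 * K * s) * (f s \<bullet> f s)"
  have "?E t \<le> ?E t0"
  proof (rule DERIV_nonpos_imp_nonincreasing[OF \<open>t0 \<le> t\<close>])
    fix s
    have "f s \<bullet> f' s \<le> norm (f s) * norm (f' s)"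
      by (rule norm_cauchy_schwarz)
    also have "\<dots> \<le> K * (f s \<bullet> f s)"
      using mult_left_mono[OF growth[of s] norm_ge_zero[of "f s"]]
      by (simp add: power2_norm_eq_inner[symmetric] power2_eq_square algebra_simps)
    finally have "f s \<bullet> f' s \<le> K * (f s \<bullet> f s)" .
    then have "(- 2 * K) * exp (- 2 * K * s) * (f s \<bullet> f s) + exp (- 2 * K * s) * (2 * (f s \<bullet> f' s)) \<le> 0"
      using mult_nonneg_nonpos[of "exp (- 2 * K * s)" "2 * (f s \<bullet> f' s) - 2 * K * (f s \<bullet> f s)"]
      by (simp add: algebra_simps)
    moreover have "(?E has_real_derivative
        (- 2 * K) * exp (- 2 * K * s) * (f s \<bullet> f s) + exp (- 2 * K * s) * (2 * (f s \<bullet> f' s))) (at s)"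
      by (auto intro!: derivative_eq_intros has_real_derivative_inner_self f')
    ultimately show "\<exists>y. (?E has_real_derivative y) (at s) \<and> y \<le> 0"
      by blast
  qed
  then have "f t \<bullet> f t \<le> 0"
    using \<open>f t0 = 0\<close> by (simp add: mult_le_0_iff)
  then show ?thesis
    using inner_gt_zero_iff[of "f t"] by linarith
qed

lemma linear_growth_zero:
  fixes f :: "real \<Rightarrow> 'a::real_inner"
  assumes f': "\<And>t. (f has_vector_derivative f' t) (at t)"
    and growth: "\<And>t. norm (f' t) \<le> K * norm (f t)"
    and "f t0 = 0"
  shows "f t = 0"
proof (cases "t0 \<le> t")
  case True
  then show ?thesis
    using linear_growth_zero_forward[OF f' growth \<open>f t0 = 0\<close>] by blast
next
  case False
  have "((\<lambda>s. f (- s)) has_vector_derivative - f' (- s)) (at s)" for s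
    using vector_diff_chain_at[OF has_vector_derivative_minus[OF has_vector_derivative_id] f']
    by (simp add: o_def)
  from linear_growth_zero_forward[OF this, of K "- t0" "- t"] show ?thesis
    using False growth \<open>f t0 = 0\<close> by simp
qed

lemma traceless_wronskian_constant:
  fixes f1 f2 g1 g2 a b c :: "real \<Rightarrow> 'a::real_normed_field"
  assumes "\<And>t. (f1 has_vector_derivative a t * f1 t + b t * f2 t) (at t)"
    and "\<And>t. (f2 has_vector_derivative c t * f1 t - a t * f2 t) (at t)"
    and "\<And>t. (g1 has_vector_derivative a t * g1 t + b t * g2 t) (at t)"
    and "\<And>t. (g2 has_vector_derivative c t * g1 t - a t * g2 t) (at t)"
  shows "f1 t * g2 t - f2 t * g1 t = f1 s * g2 s - f2 s * g1 s"
proof -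
  have "((\<lambda>t. f1 t * g2 t - f2 t * g1 t) has_vector_derivative 0) (at t within UNIV)" for t
  proof (rule has_vector_derivative_eq_rhs)
    show "((\<lambda>t. f1 t * g2 t - f2 t * g1 t) has_vector_derivative
        f1 t * (c t * g1 t - a t * g2 t) + (a t * f1 t + b t * f2 t) * g2 t
        - (f2 t * (a t * g1 t + b t * g2 t) + (c t * f1 t - a t * f2 t) * g1 t)) (at t)"
      by (intro has_vector_derivative_diff has_vector_derivative_mult assms)
  qed (simp add: algebra_simps)
  then obtain k where "\<And>t. t \<in> UNIV \<Longrightarrow> f1 t * g2 t - f2 t * g1 t = k"
    by (rule has_vector_derivative_zero_constant[OF convex_UNIV]) blast
  then show ?thesis
    by simp
qed

lemma wronskian_eq_zero_imp_zero:
  fixes u1 u2 v1 v2 w1 w2 :: "'a::field"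
  assumes "u1 * v2 - u2 * v1 = 0" and "u1 * w2 - u2 * w1 = 0"
    and "v1 * w2 - v2 * w1 \<noteq> 0"
  shows "u1 = 0" "u2 = 0"
proof -
  have "(v1 * w2 - v2 * w1) * u1 = 0" "(v1 * w2 - v2 * w1) * u2 = 0"
    using assms(1,2) by algebra+
  with assms(3) show "u1 = 0" "u2 = 0"
    by simp_all
qed

lemma norm_wronskian_le:
  fixes u1 u2 v1 v2 :: "'a::real_normed_field"
  assumes "norm u1 \<le> C" and "norm u2 \<le> C"
  shows "norm (u1 * v2 - u2 * v1) \<le> C * (norm v1 + norm v2)"
proof -
  have "norm (u1 * v2 - u2 * v1) \<le> norm u1 * norm v2 + norm u2 * norm v1"
    using norm_triangle_ineq4[of "u1 * v2" "u2 * v1"] by (simp add: norm_mult)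
  also have "\<dots> \<le> C * norm v2 + C * norm v1"
    using assms by (intro add_mono mult_right_mono) auto
  finally show ?thesis
    by (simp add: algebra_simps)
qed

lemma bounded_by_exp_eq_zero:
  fixes c :: "'a::real_normed_vector"
  assumes "a \<noteq> 0" and bound: "\<And>t. norm c \<le> K * exp (a * t)"
  shows "c = 0"
proof (rule ccontr)
  assume "c \<noteq> 0"
  then have "norm c > 0" by simp
  moreover have "norm c \<le> K"
    using bound[of 0] by simp
  ultimately have "K > 0" by linarith
  define t where "t = ln (norm c / (2 * K)) / a"
  have "exp (a * t) = norm c / (2 * K)"
    using \<open>a \<noteq> 0\<close> \<open>norm c > 0\<close> \<open>K > 0\<close> by (simp add: t_def)
  then have "norm c \<le> norm c / 2"
    using bound[of t] \<open>K > 0\<close> by simp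
  with \<open>norm c > 0\<close> show False by simp
qed

section \<open>Parallel sections\<close>

lemma parallel_has_derivative:
  assumes "smooth2 \<Phi>" and "parallel u lam \<Phi>"
  shows "(\<Phi> has_derivative
      (\<lambda>h. fst h *\<^sub>R (matA u lam z *v \<Phi> z) + snd h *\<^sub>R (matB u lam z *v \<Phi> z))) (at z)"
proof -
  obtain fx fy where d: "\<And>z. (\<Phi> has_derivative (\<lambda>h. fst h *\<^sub>R fx z + snd h *\<^sub>R fy z)) (at z)"
    using assms(1) by (cases rule: smooth2.cases) auto
  obtain x y where z: "z = (x, y)"
    by fastforce
  have "((\<lambda>s. (s, y)) has_derivative (\<lambda>h. (h, 0))) (at x)"
    by (auto intro!: derivative_eq_intros)
  from has_derivative_compose[OF this d]
  have "((\<lambda>s. \<Phi> (s, y)) has_vector_derivative fx z) (at x)"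
    by (simp add: z has_vector_derivative_def)
  moreover have "((\<lambda>s. \<Phi> (s, y)) has_vector_derivative matA u lam z *v \<Phi> z) (at x)"
    using assms(2) by (simp add: parallel_def z)
  ultimately have fx: "fx z = matA u lam z *v \<Phi> z"
    by (rule vector_derivative_unique_at)
  have "((\<lambda>t. (x, t)) has_derivative (\<lambda>h. (0, h))) (at y)"
    by (auto intro!: derivative_eq_intros)
  from has_derivative_compose[OF this d]
  have "((\<lambda>t. \<Phi> (x, t)) has_vector_derivative fy z) (at y)"
    by (simp add: z has_vector_derivative_def)
  moreover have "((\<lambda>t. \<Phi> (x, t)) has_vector_derivative matB u lam z *v \<Phi> z) (at y)"
    using assms(2) by (simp add: parallel_def z)
  ultimately have fy: "fy z = matB u lam z *v \<Phi> z"
    by (rule vector_derivative_unique_at)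
  show ?thesis
    using d[of z] by (simp add: fx fy)
qed

lemma parallel_has_vector_derivative_along_line:
  assumes "smooth2 \<Phi>" and "parallel u lam \<Phi>"
  shows "((\<lambda>t. \<Phi> (a * t, b * t)) has_vector_derivative
      a *\<^sub>R (matA u lam (a * t, b * t) *v \<Phi> (a * t, b * t))
    + b *\<^sub>R (matB u lam (a * t, b * t) *v \<Phi> (a * t, b * t))) (at t)"
proof -
  have "((\<lambda>s. (a * s, b * s)) has_derivative (\<lambda>h. (a * h, b * h))) (at t)"
    by (auto intro!: derivative_eq_intros)
  from has_derivative_compose[OF this parallel_has_derivative[OF assms]]
  show ?thesis
    by (simp add: has_vector_derivative_def scaleR_add_right mult.commute)
qed

lemma matB_independent_of_y:
  "matB (\<lambda>(x, y). g x) lam (x, y) = matB (\<lambda>(x, y). g x) lam (x, y')"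
  by (simp add: matB_def px_def py_def)

lemma parallel_vanishes_on_vertical_line:
  assumes "parallel (\<lambda>(x, y). g x) lam \<Phi>" and "\<Phi> (x, y0) = 0"
  shows "\<Phi> (x, y) = 0"
proof -
  define B where "B = matB (\<lambda>(x, y). g x) lam (x, 0)"
  obtain K where "\<And>v. norm (B *v v) \<le> norm v * K"
    using bounded_linear.bounded[OF matrix_vector_mul_bounded_linear] by blast
  moreover have "((\<lambda>t. \<Phi> (x, t)) has_vector_derivative B *v \<Phi> (x, t)) (at t)" for t
  proof -
    have "((\<lambda>t. \<Phi> (x, t)) has_vector_derivative matB (\<lambda>(x, y). g x) lam (x, t) *v \<Phi> (x, t)) (at t)"
      using assms(1) by (simp add: parallel_def)
    then show ?thesis
      by (simp add: B_def matB_independent_of_y[of g lam x t 0])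
  qed
  ultimately show ?thesis
    using linear_growth_zero[of "\<lambda>t. \<Phi> (x, t)" "\<lambda>t. B *v \<Phi> (x, t)" K y0 y] assms(2)
    by (simp add: mult.commute)
qed

section \<open>The kink\<close>

definition sech :: "real \<Rightarrow> real" where
  "sech x = 1 / cosh x"

lemma sech_exp: "sech x = 2 * exp x / (1 + (exp x)\<^sup>2)"
  by (simp add: sech_def cosh_def exp_minus field_simps power2_eq_square)

lemma tanh_exp: "tanh (x::real) = ((exp x)\<^sup>2 - 1) / (1 + (exp x)\<^sup>2)"
proof -
  have "1 + (exp x)\<^sup>2 \<noteq> 0"
    by (metis add_pos_nonneg zero_less_one zero_le_power2 less_irrefl)
  then show ?thesis
    by (simp add: tanh_def sinh_def cosh_def exp_minus scaleR_conv_of_real divide_simps)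
       (simp add: algebra_simps power2_eq_square)
qed

lemma sech_sq_plus_tanh_sq: "(sech x)\<^sup>2 + (tanh x)\<^sup>2 = 1"
  using hyperbolic_pythagoras[of x] by (simp add: sech_def tanh_def divide_simps)

lemma has_real_derivative_sech: "(sech has_real_derivative - sech x * tanh x) (at x)"
  unfolding sech_def[abs_def] tanh_def
  by (auto intro!: derivative_eq_intros simp: power2_eq_square field_simps)

lemma has_real_derivative_tanh: "(tanh has_real_derivative (sech x)\<^sup>2) (at x)"
proof -
  have "(tanh has_real_derivative 1 - (tanh x)\<^sup>2) (at x)"
    by (auto intro!: derivative_eq_intros)
  then show ?thesis
    by (rule DERIV_cong) (use sech_sq_plus_tanh_sq[of x] in simp)
qed

lemma abs_sech_le_1: "\<bar>sech x\<bar> \<le> 1"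
  using cosh_real_ge_1[of x] by (simp add: sech_def)

lemma abs_tanh_le_1: "\<bar>tanh (x::real)\<bar> \<le> 1"
  using tanh_real_bounds[of x] by auto

lemma sin_double_arctan: "sin (2 * arctan y) = 2 * y / (1 + y\<^sup>2)"
  using sin_tan_half[of "arctan y"] by (simp add: tan_arctan)

lemma cos_double_arctan: "cos (2 * arctan y) = (1 - y\<^sup>2) / (1 + y\<^sup>2)"
  using cos_tan_half[of "arctan y"] by (simp add: tan_arctan)

lemma has_real_derivative_kink: "(kink has_real_derivative 2 * sech x) (at x)"
  unfolding kink_def[abs_def] sech_exp
  by (auto intro!: derivative_eq_intros simp: field_simps)

lemma sin_kink: "sin (kink x) = - 2 * sech x * tanh x"
  and cos_kink: "cos (kink x) = 1 - 2 * (sech x)\<^sup>2"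
proof -
  have half: "sin (2 * arctan (exp x)) = sech x" "cos (2 * arctan (exp x)) = - tanh x"
    by (simp_all add: sin_double_arctan cos_double_arctan sech_exp tanh_exp minus_divide_left)
  have kink: "kink x = 2 * (2 * arctan (exp x))" by (simp add: kink_def)
  show "sin (kink x) = - 2 * sech x * tanh x"
    unfolding kink sin_double[of "2 * arctan (exp x)"] half by simp
  show "cos (kink x) = 1 - 2 * (sech x)\<^sup>2"
    unfolding kink cos_double[of "2 * arctan (exp x)"] half
    using sech_sq_plus_tanh_sq[of x] by simp
qed

lemma px_kink: "px (\<lambda>(x, y). kink x) (x, y) = 2 * sech x"
  unfolding px_def using has_real_derivative_kink[of x] by (simp add: DERIV_imp_deriv)

lemma py_kink: "py (\<lambda>(x, y). kink x) (x, y) = 0"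
  unfolding py_def by simp

section \<open>Parallel sections along the line\<close>

(* The entries [[diag, upper], [lower, - diag]] of the matrix p A + q B at (p t, y),
   for u = kink and lambda = q + i p. *)
definition kink_line_diag :: "real \<Rightarrow> real \<Rightarrow> complex" where
  "kink_line_diag p t = - (complex_of_real (tanh (p * t)))\<^sup>2 / 2"

definition kink_line_upper :: "real \<Rightarrow> real \<Rightarrow> real \<Rightarrow> complex" where
  "kink_line_upper p q t =
     complex_of_real (sech (p * t)) * (complex_of_real (tanh (p * t)) - Complex p q) / 2"

definition kink_line_lower :: "real \<Rightarrow> real \<Rightarrow> real \<Rightarrow> complex" where
  "kink_line_lower p q t =
     complex_of_real (sech (p * t)) * (complex_of_real (tanh (p * t)) + Complex p q) / 2"

definition kink_line_solution :: "real \<Rightarrow> real \<Rightarrow> (real \<Rightarrow> complex) \<Rightarrow> (real \<Rightarrow> complex) \<Rightarrow> bool"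
  where "kink_line_solution p q f1 f2 \<longleftrightarrow> (\<forall>t.
      (f1 has_vector_derivative kink_line_diag p t * f1 t + kink_line_upper p q t * f2 t) (at t)
    \<and> (f2 has_vector_derivative kink_line_lower p q t * f1 t - kink_line_diag p t * f2 t) (at t))"

lemma of_real_sum_sq_eq_1:
  assumes "x\<^sup>2 + y\<^sup>2 = 1"
  shows "(complex_of_real x)\<^sup>2 + (complex_of_real y)\<^sup>2 = 1"
  using arg_cong[OF assms, of complex_of_real] by simp

lemma kink_line_matrix_components:
  fixes p q :: real
  assumes pq: "q\<^sup>2 + p\<^sup>2 = 1"
  shows "(p *\<^sub>R (matA (\<lambda>(x, y). kink x) (Complex q p) (p * t, y) *v v)
          + q *\<^sub>R (matB (\<lambda>(x, y). kink x) (Complex q p) (p * t, y) *v v)) $ 1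
         = kink_line_diag p t * v $ 1 + kink_line_upper p q t * v $ 2" (is ?c1)
    and "(p *\<^sub>R (matA (\<lambda>(x, y). kink x) (Complex q p) (p * t, y) *v v)
          + q *\<^sub>R (matB (\<lambda>(x, y). kink x) (Complex q p) (p * t, y) *v v)) $ 2
         = kink_line_lower p q t * v $ 1 - kink_line_diag p t * v $ 2" (is ?c2)
proof -
  have inverse_lam: "inverse (Complex q p) = Complex q (- p)"
    using pq by (simp add: inverse_complex.ctr)
  note simps = matA_def matB_def cmat_scale_def sigma1_def sigma2_def sigma3_def
    matrix_vector_mult_def sum_2 px_kink py_kink sin_kink cos_kink inverse_lam
  note unfolds = kink_line_diag_def kink_line_upper_def kink_line_lower_def Complex_eq of_real_minus
    of_real_minus scaleR_conv_of_real
  note identities = power2_i of_real_sum_sq_eq_1[OF pq]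
    of_real_sum_sq_eq_1[OF sech_sq_plus_tanh_sq[of "p * t"]]
  show ?c1
    apply (simp add: simps)
    unfolding unfolds using identities by algebra
  show ?c2
    apply (simp add: simps)
    unfolding unfolds using identities by algebra
qed

lemma has_vector_derivative_complex_tanh_scaled:
  "((\<lambda>t. complex_of_real (tanh (p * t))) has_vector_derivative
     of_real p * (of_real (sech (p * t)))\<^sup>2) (at t)"
proof -
  have "((\<lambda>t. tanh (p * t)) has_real_derivative (sech (p * t))\<^sup>2 * p) (at t)"
    by (rule DERIV_chain2[OF has_real_derivative_tanh]) (auto intro!: derivative_eq_intros)
  from has_vector_derivative_of_real[OF this] show ?thesis
    by (simp add: mult.commute)
qed

lemma has_vector_derivative_complex_sech_scaled:
  "((\<lambda>t. complex_of_real (sech (p * t))) has_vector_derivative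
     - of_real p * of_real (sech (p * t)) * of_real (tanh (p * t))) (at t)"
proof -
  have "((\<lambda>t. sech (p * t)) has_real_derivative - sech (p * t) * tanh (p * t) * p) (at t)"
    by (rule DERIV_chain2[OF has_real_derivative_sech]) (auto intro!: derivative_eq_intros)
  from has_vector_derivative_of_real[OF this] show ?thesis
    by (simp add: mult.commute mult.left_commute)
qed

lemma kink_line_solution_decaying:
  assumes pq: "q\<^sup>2 + p\<^sup>2 = 1"
  shows "kink_line_solution p q
    (\<lambda>t. of_real (exp (- t / 2)) * (Complex p (- q) + of_real (tanh (p * t))))
    (\<lambda>t. - of_real (exp (- t / 2)) * of_real (sech (p * t)))"
proof -
  have exp': "((\<lambda>t. complex_of_real (exp (- t / 2))) has_vector_derivative
      of_real (- exp (- t / 2) / 2)) (at t)" for t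
    by (rule has_vector_derivative_of_real) (auto intro!: derivative_eq_intros)
  note tanh' = has_vector_derivative_complex_tanh_scaled[of p]
  note sech' = has_vector_derivative_complex_sech_scaled[of p]
  note defs = kink_line_diag_def kink_line_upper_def kink_line_lower_def Complex_eq of_real_minus
  show ?thesis
    unfolding kink_line_solution_def
    apply (intro allI conjI)
    subgoal for t
      apply (rule has_vector_derivative_eq_rhs[OF has_vector_derivative_mult[OF exp'
            has_vector_derivative_add[OF has_vector_derivative_const tanh']]])
      unfolding defs
      using power2_i of_real_sum_sq_eq_1[OF pq] of_real_sum_sq_eq_1[OF sech_sq_plus_tanh_sq[of "p * t"]]
      apply (simp add: field_simps) by algebra
    subgoal for t
      apply (rule has_vector_derivative_eq_rhs[OF has_vector_derivative_mult[OF
            has_vector_derivative_minus[OF exp'] sech']])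
      unfolding defs
      using power2_i of_real_sum_sq_eq_1[OF pq] of_real_sum_sq_eq_1[OF sech_sq_plus_tanh_sq[of "p * t"]]
      apply (simp add: field_simps) by algebra
    done
qed

lemma kink_line_solution_growing:
  assumes pq: "q\<^sup>2 + p\<^sup>2 = 1"
  shows "kink_line_solution p q
    (\<lambda>t. of_real (exp (t / 2)) * of_real (sech (p * t)))
    (\<lambda>t. of_real (exp (t / 2)) * (of_real (tanh (p * t)) - Complex p (- q)))"
proof -
  have exp': "((\<lambda>t. complex_of_real (exp (t / 2))) has_vector_derivative
      of_real (exp (t / 2) / 2)) (at t)" for t
    by (rule has_vector_derivative_of_real) (auto intro!: derivative_eq_intros)
  note tanh' = has_vector_derivative_complex_tanh_scaled[of p]
  note sech' = has_vector_derivative_complex_sech_scaled[of p]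
  note defs = kink_line_diag_def kink_line_upper_def kink_line_lower_def Complex_eq of_real_minus
  show ?thesis
    unfolding kink_line_solution_def
    apply (intro allI conjI)
    subgoal for t
      apply (rule has_vector_derivative_eq_rhs[OF has_vector_derivative_mult[OF exp' sech']])
      unfolding defs
      using power2_i of_real_sum_sq_eq_1[OF pq] of_real_sum_sq_eq_1[OF sech_sq_plus_tanh_sq[of "p * t"]]
      apply (simp add: field_simps) by algebra
    subgoal for t
      apply (rule has_vector_derivative_eq_rhs[OF has_vector_derivative_mult[OF exp'
            has_vector_derivative_diff[OF tanh' has_vector_derivative_const]]])
      unfolding defs
      using power2_i of_real_sum_sq_eq_1[OF pq] of_real_sum_sq_eq_1[OF sech_sq_plus_tanh_sq[of "p * t"]]
      apply (simp add: field_simps) by algebra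
    done
qed

lemma parallel_kink_line_solution:
  assumes pq: "q\<^sup>2 + p\<^sup>2 = 1"
    and "smooth2 \<Phi>" and "parallel (\<lambda>(x, y). kink x) (Complex q p) \<Phi>"
  shows "kink_line_solution p q (\<lambda>t. \<Phi> (p * t, q * t) $ 1) (\<lambda>t. \<Phi> (p * t, q * t) $ 2)"
proof -
  note line = parallel_has_vector_derivative_along_line[OF assms(2,3), of p q]
  note component = bounded_linear.has_vector_derivative[OF bounded_linear_vec_nth line]
  have "((\<lambda>t. \<Phi> (p * t, q * t) $ 1) has_vector_derivative
      kink_line_diag p t * \<Phi> (p * t, q * t) $ 1 + kink_line_upper p q t * \<Phi> (p * t, q * t) $ 2) (at t)"
    "((\<lambda>t. \<Phi> (p * t, q * t) $ 2) has_vector_derivative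
      kink_line_lower p q t * \<Phi> (p * t, q * t) $ 1 - kink_line_diag p t * \<Phi> (p * t, q * t) $ 2) (at t)"
    for t
    using component[of 1 t] component[of 2 t] unfolding kink_line_matrix_components[OF pq] .
  then show ?thesis
    unfolding kink_line_solution_def by blast
qed

lemma kink_line_wronskian_constant:
  assumes "kink_line_solution p q f1 f2" and "kink_line_solution p q g1 g2"
  shows "f1 t * g2 t - f2 t * g1 t = f1 s * g2 s - f2 s * g1 s"
  using assms unfolding kink_line_solution_def
  by (intro traceless_wronskian_constant) blast+

lemma kink_line_wronskian_vanishes:
  assumes f: "kink_line_solution p q f1 f2" and g: "kink_line_solution p q g1 g2"
    and f_bound: "\<And>t. norm (f1 t) \<le> C" "\<And>t. norm (f2 t) \<le> C"
    and g_bound: "\<And>t. norm (g1 t) + norm (g2 t) \<le> K * exp (a * t)" and "a \<noteq> 0"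
  shows "f1 t * g2 t - f2 t * g1 t = 0"
proof -
  have "C \<ge> 0"
    using order_trans[OF norm_ge_zero f_bound(1)] .
  have "f1 0 * g2 0 - f2 0 * g1 0 = 0"
  proof (rule bounded_by_exp_eq_zero[OF \<open>a \<noteq> 0\<close>])
    fix s
    have "norm (f1 0 * g2 0 - f2 0 * g1 0) = norm (f1 s * g2 s - f2 s * g1 s)"
      using kink_line_wronskian_constant[OF f g, of 0 s] by simp
    also have "\<dots> \<le> C * (norm (g1 s) + norm (g2 s))"
      using f_bound by (rule norm_wronskian_le)
    also have "\<dots> \<le> C * (K * exp (a * s))"
      using \<open>C \<ge> 0\<close> g_bound[of s] by (intro mult_left_mono)
    finally show "norm (f1 0 * g2 0 - f2 0 * g1 0) \<le> C * K * exp (a * s)"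
      by (simp add: mult.assoc)
  qed
  then show ?thesis
    using kink_line_wronskian_constant[OF f g, of t 0] by simp
qed

lemma kink_line_solution_bounded_eq_zero:
  assumes pq: "q\<^sup>2 + p\<^sup>2 = 1" and "q \<noteq> 0" and f: "kink_line_solution p q f1 f2"
    and f_bound: "\<And>t. norm (f1 t) \<le> C" "\<And>t. norm (f2 t) \<le> C"
  shows "f1 t = 0" "f2 t = 0"
proof -
  define \<nu> where "\<nu> = Complex p (- q)"
  define T S :: "real \<Rightarrow> complex"
    where "T t = of_real (tanh (p * t))" and "S t = of_real (sech (p * t))" for t
  define d1 d2 where "d1 t = of_real (exp (- t / 2)) * (\<nu> + T t)"
    and "d2 t = - of_real (exp (- t / 2)) * S t" for t
  define g1 g2 where "g1 t = of_real (exp (t / 2)) * S t"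
    and "g2 t = of_real (exp (t / 2)) * (T t - \<nu>)" for t
  have d: "kink_line_solution p q d1 d2" and g: "kink_line_solution p q g1 g2"
    using kink_line_solution_decaying[OF pq] kink_line_solution_growing[OF pq]
    by (simp_all add: d1_def[abs_def] d2_def[abs_def] g1_def[abs_def] g2_def[abs_def]
        T_def S_def \<nu>_def)
  have "norm \<nu> = 1"
    using pq by (simp add: \<nu>_def cmod_def)
  have TS_bound: "norm (T t) \<le> 1" "norm (S t) \<le> 1" for t
    by (simp_all add: T_def S_def abs_tanh_le_1 abs_sech_le_1)
  have d_bound: "norm (d1 t) + norm (d2 t) \<le> 3 * exp ((- 1 / 2) * t)" for t
  proof -
    have "norm (d1 t) + norm (d2 t) = exp (- t / 2) * (norm (\<nu> + T t) + norm (S t))"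
      unfolding d1_def d2_def norm_minus_cancel norm_mult norm_of_real abs_exp_cancel
      by (simp add: distrib_left)
    also have "\<dots> \<le> exp (- t / 2) * 3"
      using norm_triangle_ineq[of \<nu> "T t"] TS_bound[of t] \<open>norm \<nu> = 1\<close>
      by (intro mult_left_mono) auto
    finally show ?thesis
      by (simp add: mult.commute)
  qed
  have g_bound: "norm (g1 t) + norm (g2 t) \<le> 3 * exp ((1 / 2) * t)" for t
  proof -
    have "norm (g1 t) + norm (g2 t) = exp (t / 2) * (norm (S t) + norm (T t - \<nu>))"
      unfolding g1_def g2_def norm_mult norm_of_real abs_exp_cancel
      by (simp add: distrib_left)
    also have "\<dots> \<le> exp (t / 2) * 3"
      using norm_triangle_ineq4[of "T t" \<nu>] TS_bound[of t] \<open>norm \<nu> = 1\<close>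
      by (intro mult_left_mono) auto
    finally show ?thesis
      by (simp add: mult.commute)
  qed
  have "f1 t * d2 t - f2 t * d1 t = 0"
    by (rule kink_line_wronskian_vanishes[OF f d f_bound d_bound]) simp
  moreover have "f1 t * g2 t - f2 t * g1 t = 0"
    by (rule kink_line_wronskian_vanishes[OF f g f_bound g_bound]) simp
  moreover have "d1 t * g2 t - d2 t * g1 t = 1 - \<nu>\<^sup>2"
  proof -
    have "(S t)\<^sup>2 + (T t)\<^sup>2 = 1"
      by (simp add: S_def T_def of_real_sum_sq_eq_1[OF sech_sq_plus_tanh_sq])
    moreover have "complex_of_real (exp (- t / 2)) * of_real (exp (t / 2)) = 1"
      by (simp flip: of_real_mult exp_add)
    ultimately show ?thesis
      unfolding d1_def d2_def g1_def g2_def by algebra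
  qed
  moreover have "1 - \<nu>\<^sup>2 \<noteq> 0"
  proof
    assume "1 - \<nu>\<^sup>2 = 0"
    then have "1 + q * q = p * p"
      by (simp add: \<nu>_def complex_eq_iff power2_eq_square)
    with pq have "q * q = 0"
      unfolding power2_eq_square by linarith
    with \<open>q \<noteq> 0\<close> show False
      by simp
  qed
  ultimately show "f1 t = 0" "f2 t = 0"
    using wronskian_eq_zero_imp_zero by metis+
qed

theorem corollary3p10:
  fixes q p :: real and \<Phi> :: "real \<times> real \<Rightarrow> complex^2"
  assumes "q\<^sup>2 + p\<^sup>2 = 1" and "p > 0" and "Complex q p \<noteq> \<i>"
    and "smooth2 \<Phi>"
    and "parallel (\<lambda>(x, y). kink x) (Complex q p) \<Phi>"
    and "\<exists>C. \<forall>x y. - q * x + p * y = 0 \<longrightarrow> norm (\<Phi> (x, y)) \<le> C"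
  shows "\<forall>z. \<Phi> z = 0"
proof -
  obtain C where C: "\<And>x y. - q * x + p * y = 0 \<Longrightarrow> norm (\<Phi> (x, y)) \<le> C"
    using assms(6) by blast
  have "q \<noteq> 0"
  proof
    assume "q = 0"
    then have "p = 1"
      using assms(1,2) by (simp add: power2_eq_1_iff)
    with \<open>q = 0\<close> assms(3) show False
      by (simp add: complex_eq_iff)
  qed
  have "norm (\<Phi> (p * t, q * t) $ i) \<le> C" for t i
    by (rule order_trans[OF Finite_Cartesian_Product.norm_nth_le C]) (simp add: algebra_simps)
  from kink_line_solution_bounded_eq_zero[OF assms(1) \<open>q \<noteq> 0\<close>
      parallel_kink_line_solution[OF assms(1,4,5)] this this]
  have line: "\<Phi> (p * t, q * t) = 0" for t
    by (simp add: vec_eq_iff forall_2)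
  show ?thesis
  proof
    fix z :: "real \<times> real"
    obtain x y where z: "z = (x, y)"
      by fastforce
    have "\<Phi> (x, q * (x / p)) = 0"
      using line[of "x / p"] assms(2) by simp
    then show "\<Phi> z = 0"
      unfolding z by (rule parallel_vanishes_on_vertical_line[OF assms(5)])
  qed
qed

end
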